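(* Let $n=p_1^{\alpha_1}p_2^{\alpha_2}\cdots p_r^{\alpha_r}$, where $r\geq 2$, $\alpha_1,\ldots,\alpha_r$ are positive integers and $p_1<p_2<\cdots<p_r$ are primes. Suppose that at least one of the following holds: (i) $p_1\geq r+1$ and $p_r>r\,p_{r-1}$; (ii) $p_{i+1}>r\,p_i$ for each $i\in\{1,2,\ldots,r-1\}$. Then $\delta(\mathcal{P}(C_n))=\deg(p_r^{\alpha_r})$.
   Context: For a finite group $G$, the power graph $\mathcal{P}(G)$ is the simple undirected graph with vertex set $G$ in which two distinct vertices are adjacent if one is an integral power of the other. $C_n$ denotes the cyclic group of order $n$, identified with $\mathbb{Z}_n=\{0,1,\ldots,n-1\}$, so a positive divisor $d<n$ of $n$ is regarded as the element $d\in\mathbb{Z}_n$. $\deg(a)$ is the degree of vertex $a$ in $\mathcal{P}(C_n)$ and $\delta$ denotes minimum degree. *)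

theory Defs
  imports "HOL-Computational_Algebra.Primes"
begin

text \<open>Power graph of the cyclic group C_n, identified with Z_n = {0,...,n-1} (written additively).
  In a finite cyclic group, integral powers coincide with natural powers.\<close>

definition pg_adj :: "nat \<Rightarrow> nat \<Rightarrow> nat \<Rightarrow> bool" where
  "pg_adj n a b \<longleftrightarrow> a \<noteq> b \<and>
     ((\<exists>k::int. int b = (k * int a) mod int n) \<or> (\<exists>k::int. int a = (k * int b) mod int n))"

definition pg_deg :: "nat \<Rightarrow> nat \<Rightarrow> nat" where
  "pg_deg n a = card {b \<in> {..<n}. pg_adj n a b}"

definition pg_min_deg :: "nat \<Rightarrow> nat" where
  "pg_min_deg n = Min (pg_deg n ` {..<n})"

end

theory Submission
  imports Defs "HOL-Number_Theory.Totient"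
begin

text \<open>
  Together with a itself, the neighbours of a in the power graph of \<open>C\<^sub>n\<close> are the elements
  whose gcd with n is comparable with \<open>gcd a n\<close> under divisibility, so
  \<open>deg a + 1 = \<Sum> \<phi>(n / d)\<close>, summed over the divisors d of n comparable with \<open>gcd a n\<close>.

  Write \<open>n = m p\<^sup>\<alpha>\<close> with \<open>p = p\<^sub>r\<close>. For \<open>N = p\<^sup>\<alpha>\<close> the sum is \<open>m + \<phi>(m) (p\<^sup>\<alpha> - 1)\<close>.
  If \<open>gcd a n\<close> is coprime to m, it is a power of p whose comparable divisors include those of N,
  so \<open>deg a \<ge> deg N\<close>. Otherwise some prime \<open>q | m\<close> divides \<open>gcd a n\<close>; then the divisors 1 and q
  alone give \<open>deg a + 1 \<ge> \<phi>(n) + \<phi>(n/q) \<ge> \<phi>(n) + \<phi>(n)/q\<close>, which beats \<open>deg N + 1\<close> as soon as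
  \<open>m \<le> k \<phi>(m)\<close> and \<open>k q < p\<close> for every such q. Hypotheses (i) and (ii) give this with \<open>k = r\<close>:
  the second condition from \<open>r p\<^sub>r\<^sub>-\<^sub>1 < p\<^sub>r\<close>, the first from \<open>\<phi>(m)/m = \<Prod>(1 - 1/p\<^sub>i)\<close> and the
  Weierstrass product inequality.
\<close>

lemma ex_int_mult_mod_eq_iff_gcd_dvd:
  fixes n a b :: nat
  assumes "0 < n" "b < n"
  shows "(\<exists>k::int. int b = (k * int a) mod int n) \<longleftrightarrow> gcd a n dvd b"
proof
  assume "\<exists>k::int. int b = (k * int a) mod int n"
  then obtain k where "int b = (k * int a) mod int n" by blast
  then have "int b = k * int a - int n * ((k * int a) div int n)"
    by (simp add: minus_div_mult_eq_mod[symmetric] algebra_simps)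
  moreover have "gcd (int a) (int n) dvd k * int a - int n * ((k * int a) div int n)"
    by (intro dvd_diff dvd_mult dvd_mult2) auto
  ultimately show "gcd a n dvd b"
    by (metis gcd_int_int_eq int_dvd_int_iff)
next
  assume "gcd a n dvd b"
  then obtain t where t: "b = gcd a n * t" by blast
  obtain u v :: int where uv: "u * int a + v * int n = gcd (int a) (int n)"
    using bezout_int by blast
  have "int b = (u * int a + v * int n) * int t"
    using t uv by (simp add: gcd_int_int_eq)
  then have "int b mod int n = (int t * u * int a) mod int n"
    by (simp add: algebra_simps mod_add_left_eq[symmetric])
  then show "\<exists>k::int. int b = (k * int a) mod int n"
    using assms by auto
qed

lemma pg_adj_iff_gcd_dvd:
  fixes n a b :: nat
  assumes "0 < n" "a < n" "b < n"
  shows "pg_adj n a b \<longleftrightarrow> a \<noteq> b \<and> (gcd a n dvd gcd b n \<or> gcd b n dvd gcd a n)"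
  using assms by (simp add: pg_adj_def ex_int_mult_mod_eq_iff_gcd_dvd)

lemma card_lessThan_gcd_eq_totient:
  fixes n d :: nat
  assumes "0 < n" "d dvd n"
  shows "card {b \<in> {..<n}. gcd b n = d} = totient (n div d)"
proof -
  have "bij_betw (\<lambda>k. k mod n) {k \<in> {0<..n}. gcd k n = d} {b \<in> {..<n}. gcd b n = d}"
    by (rule bij_betw_byWitness[where f' = "\<lambda>b. if b = 0 then n else b"])
       (use assms in \<open>auto simp: le_less gcd.commute[of _ n] gcd_mod_right\<close>)
  then show ?thesis
    using card_gcd_eq_totient[OF assms] bij_betw_same_card by fastforce
qed

definition comparable_divisors :: "nat \<Rightarrow> nat \<Rightarrow> nat set" where
  "comparable_divisors n c = {d. d dvd n \<and> (c dvd d \<or> d dvd c)}"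

lemma finite_comparable_divisors [simp]: "0 < n \<Longrightarrow> finite (comparable_divisors n c)"
  unfolding comparable_divisors_def by (rule finite_subset[of _ "{d. d dvd n}"]) auto

lemma pg_deg_eq_sum_totient:
  fixes n a :: nat
  assumes "0 < n" "a < n"
  shows "pg_deg n a + 1 = (\<Sum>d\<in>comparable_divisors n (gcd a n). totient (n div d))"
proof -
  let ?D = "comparable_divisors n (gcd a n)"
  let ?S = "{b \<in> {..<n}. gcd b n \<in> ?D}"
  have "{b \<in> {..<n}. pg_adj n a b} = ?S - {a}"
    using assms by (auto simp: pg_adj_iff_gcd_dvd comparable_divisors_def)
  moreover have "a \<in> ?S"
    using assms by (auto simp: comparable_divisors_def)
  ultimately have "pg_deg n a + 1 = card ?S"
    unfolding pg_deg_def using card_Suc_Diff1[of ?S a] by simp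
  also have "?S = (\<Union>d\<in>?D. {b \<in> {..<n}. gcd b n = d})"
    by auto
  also have "card \<dots> = (\<Sum>d\<in>?D. card {b \<in> {..<n}. gcd b n = d})"
    by (rule card_UN_disjoint) (use assms in auto)
  also have "\<dots> = (\<Sum>d\<in>?D. totient (n div d))"
    by (rule sum.cong) (use assms card_lessThan_gcd_eq_totient[OF assms(1)] in \<open>auto simp: comparable_divisors_def\<close>)
  finally show ?thesis .
qed

lemma sum_totient_prime_powers:
  fixes p a :: nat
  assumes "prime p"
  shows "(\<Sum>k\<in>{1..a}. totient (p ^ k)) + 1 = p ^ a"
proof (induction a)
  case (Suc a)
  have "totient (p ^ Suc a) = p ^ a * (p - 1)"
    using assms by (rule totient_prime_power_Suc)
  with Suc have "(\<Sum>k\<in>{1..Suc a}. totient (p ^ k)) + 1 = p ^ a + p ^ a * (p - 1)"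
    by simp
  also have "\<dots> = p ^ Suc a"
    using prime_gt_0_nat[OF assms] by (cases p) (auto simp: algebra_simps)
  finally show ?case .
qed simp

lemma comparable_divisors_prime_power:
  fixes p m \<alpha> :: nat
  assumes "prime p"
  shows "comparable_divisors (m * p ^ \<alpha>) (p ^ \<alpha>) =
           {d. d dvd m * p ^ \<alpha> \<and> p ^ \<alpha> dvd d} \<union> (\<lambda>k. p ^ (\<alpha> - k)) ` {1..\<alpha>}"
    (is "?D = ?A \<union> ?B")
proof
  show "?D \<subseteq> ?A \<union> ?B"
  proof
    fix d assume d: "d \<in> ?D"
    show "d \<in> ?A \<union> ?B"
    proof (cases "p ^ \<alpha> dvd d")
      case False
      with d obtain i where "i \<le> \<alpha>" "d = p ^ i"
        using divides_primepow_nat[OF assms(1)] by (auto simp: comparable_divisors_def)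
      with False have "\<alpha> - i \<in> {1..\<alpha>}" "d = p ^ (\<alpha> - (\<alpha> - i))"
        by (auto simp: le_less)
      then show ?thesis by blast
    qed (use d in \<open>simp add: comparable_divisors_def\<close>)
  qed
  show "?A \<union> ?B \<subseteq> ?D"
    by (auto simp: comparable_divisors_def le_imp_power_dvd)
qed

lemma comparable_divisors_prime_power_mono:
  fixes p n \<alpha> w :: nat
  assumes "prime p" "p ^ \<alpha> dvd n" "w \<le> \<alpha>"
  shows "comparable_divisors n (p ^ \<alpha>) \<subseteq> comparable_divisors n (p ^ w)"
proof
  fix d assume d: "d \<in> comparable_divisors n (p ^ \<alpha>)"
  have "p ^ w dvd d \<or> d dvd p ^ w"
  proof (cases "p ^ \<alpha> dvd d")
    case True
    then show ?thesis using assms(3) le_imp_power_dvd dvd_trans by blast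
  next
    case False
    with d obtain i where "d = p ^ i"
      using divides_primepow_nat[OF assms(1)] by (auto simp: comparable_divisors_def)
    then show ?thesis by (cases "i \<le> w") (auto simp: le_imp_power_dvd)
  qed
  with d show "d \<in> comparable_divisors n (p ^ w)"
    by (simp add: comparable_divisors_def)
qed

lemma sum_totient_cofactors_of_multiples:
  fixes c m :: nat
  assumes "0 < c" "0 < m"
  shows "(\<Sum>d | d dvd m * c \<and> c dvd d. totient (m * c div d)) = m"
proof -
  have "(\<Sum>d | d dvd m * c \<and> c dvd d. totient (m * c div d)) = (\<Sum>f | f dvd m. totient f)"
  proof (rule sum.reindex_bij_witness[of _ "\<lambda>f. m * c div f" "\<lambda>d. m * c div d"])
    fix f assume "f \<in> {f. f dvd m}"
    then obtain g where g: "m = f * g" by blast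
    with assms have "m * c div f = c * g" "m * c div (c * g) = f"
      by (simp_all add: algebra_simps)
    with g show "m * c div (m * c div f) = f" "m * c div f \<in> {d. d dvd m * c \<and> c dvd d}"
      by auto
  next
    fix d assume "d \<in> {d. d dvd m * c \<and> c dvd d}"
    then obtain g h where "d = c * g" "m * c = d * h" by blast
    with assms show "m * c div d \<in> {f. f dvd m}" "m * c div (m * c div d) = d"
      by auto
  qed simp
  then show ?thesis by (simp add: totient_divisor_sum)
qed

lemma pg_deg_prime_power_part:
  fixes p m \<alpha> :: nat
  assumes "prime p" "\<not> p dvd m" "1 < m"
  shows "pg_deg (m * p ^ \<alpha>) (p ^ \<alpha>) + 1 = m + totient m * (p ^ \<alpha> - 1)"
proof -
  define n where "n = m * p ^ \<alpha>"
  let ?A = "{d. d dvd n \<and> p ^ \<alpha> dvd d}"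
  let ?B = "(\<lambda>k. p ^ (\<alpha> - k)) ` {1..\<alpha>}"
  have p1: "1 < p" using assms(1) prime_gt_1_nat by blast
  have n0: "0 < n" using assms p1 by (simp add: n_def)
  have "p ^ \<alpha> < n"
    using assms(3) p1 by (simp add: n_def)
  then have "pg_deg n (p ^ \<alpha>) + 1 = (\<Sum>d\<in>comparable_divisors n (p ^ \<alpha>). totient (n div d))"
    using pg_deg_eq_sum_totient[OF n0] by (simp add: n_def)
  also have "\<dots> = (\<Sum>d\<in>?A. totient (n div d)) + (\<Sum>d\<in>?B. totient (n div d))"
  proof -
    have "comparable_divisors n (p ^ \<alpha>) = ?A \<union> ?B"
      unfolding n_def using assms(1) by (rule comparable_divisors_prime_power)
    moreover have "?A \<inter> ?B = {}"
      using p1 by (auto simp: dvd_power_iff_le)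
    moreover have "finite ?A"
      using n0 by (rule_tac finite_subset[of _ "{d. d dvd n}"]) auto
    ultimately show ?thesis
      by (simp add: sum.union_disjoint)
  qed
  also have "(\<Sum>d\<in>?A. totient (n div d)) = m"
    unfolding n_def using assms(3) p1 by (intro sum_totient_cofactors_of_multiples) auto
  also have "(\<Sum>d\<in>?B. totient (n div d)) = (\<Sum>k\<in>{1..\<alpha>}. totient m * totient (p ^ k))"
  proof -
    have "inj_on (\<lambda>k. p ^ (\<alpha> - k)) {1..\<alpha>}"
      using p1 by (intro inj_onI) (simp add: power_inject_exp, linarith)
    moreover have "totient (n div p ^ (\<alpha> - k)) = totient m * totient (p ^ k)"
      if "k \<in> {1..\<alpha>}" for k
    proof -
      have "p ^ \<alpha> = p ^ (\<alpha> - k) * p ^ k"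
        using that by (simp add: power_add[symmetric])
      then have "n div p ^ (\<alpha> - k) = m * p ^ k"
        using p1 by (simp add: n_def)
      moreover have "coprime m (p ^ k)"
        using prime_imp_coprime[OF assms(1,2)] by (simp add: coprime_commute)
      ultimately show ?thesis by (simp add: totient_mult_coprime)
    qed
    ultimately show ?thesis by (simp add: sum.reindex)
  qed
  also have "\<dots> = totient m * (\<Sum>k\<in>{1..\<alpha>}. totient (p ^ k))"
    by (simp add: sum_distrib_left)
  also have "\<dots> = totient m * (p ^ \<alpha> - 1)"
    using sum_totient_prime_powers[OF assms(1), of \<alpha>] by (metis add_diff_cancel_right')
  finally show ?thesis by (simp only: n_def)
qed

lemma totient_le_prime_mult_totient_div:
  fixes p n :: nat
  assumes "prime p" "p dvd n"
  shows "totient n \<le> p * totient (n div p)"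
proof -
  obtain x where x: "n = p * x" using assms(2) by blast
  show ?thesis
  proof (cases "p dvd x")
    case True
    have "totient (p * x) * totient p = totient p * totient x * p"
      using totient_gcd[of p x] True by (simp add: gcd_nat.absorb1)
    then have "totient (p * x) = p * totient x"
      using prime_gt_0_nat[OF assms(1)] by (simp add: ac_simps)
    then show ?thesis using x prime_gt_0_nat[OF assms(1)] by simp
  next
    case False
    then have "totient (p * x) = totient p * totient x"
      using prime_imp_coprime[OF assms(1)] by (simp add: totient_mult_coprime)
    then show ?thesis using x totient_le[of p] prime_gt_0_nat[OF assms(1)] by simp
  qed
qed

lemma pg_deg_ge_of_prime_dvd_gcd:
  fixes n a q :: nat
  assumes "0 < n" "a < n" "prime q" "q dvd gcd a n"
  shows "totient n + totient (n div q) \<le> pg_deg n a + 1"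
proof -
  have "{1, q} \<subseteq> comparable_divisors n (gcd a n)"
    using assms(4) by (auto simp: comparable_divisors_def intro: dvd_trans)
  then have "(\<Sum>d\<in>{1, q}. totient (n div d)) \<le> (\<Sum>d\<in>comparable_divisors n (gcd a n). totient (n div d))"
    using assms(1) by (intro sum_mono2) auto
  moreover have "q \<noteq> 1" using assms(3) by auto
  ultimately show ?thesis
    using pg_deg_eq_sum_totient[OF assms(1,2)] by simp
qed

lemma pg_deg_prime_power_part_le_of_coprime_gcd:
  fixes p m \<alpha> a :: nat
  assumes "prime p" "1 < m" "a < m * p ^ \<alpha>" "coprime (gcd a (m * p ^ \<alpha>)) m"
  shows "pg_deg (m * p ^ \<alpha>) (p ^ \<alpha>) \<le> pg_deg (m * p ^ \<alpha>) a"
proof -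
  define n where "n = m * p ^ \<alpha>"
  have n0: "0 < n" using assms(3) unfolding n_def by linarith
  have "gcd a n dvd p ^ \<alpha>"
    using assms(4) coprime_dvd_mult_right_iff[of "gcd a n" m "p ^ \<alpha>"] by (simp add: n_def)
  then obtain w where "w \<le> \<alpha>" "gcd a n = p ^ w"
    using divides_primepow_nat[OF assms(1)] by blast
  then have "comparable_divisors n (p ^ \<alpha>) \<subseteq> comparable_divisors n (gcd a n)"
    using comparable_divisors_prime_power_mono[OF assms(1)] by (simp add: n_def)
  then have "(\<Sum>d\<in>comparable_divisors n (p ^ \<alpha>). totient (n div d))
               \<le> (\<Sum>d\<in>comparable_divisors n (gcd a n). totient (n div d))"
    using n0 by (intro sum_mono2) auto
  moreover have "p ^ \<alpha> < n" "a < n"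
    using assms(2,3) prime_gt_1_nat[OF assms(1)] by (simp_all add: n_def)
  moreover have "gcd (p ^ \<alpha>) n = p ^ \<alpha>"
    by (simp add: n_def)
  ultimately have "pg_deg n (p ^ \<alpha>) \<le> pg_deg n a"
    using pg_deg_eq_sum_totient[OF n0] by (metis add_le_cancel_right)
  then show ?thesis by (simp only: n_def)
qed

lemma pg_deg_prime_power_part_le_of_prime_dvd_gcd:
  fixes p m k \<alpha> q a :: nat
  assumes "prime p" "0 < \<alpha>" "1 < m" "\<not> p dvd m" "m \<le> k * totient m"
    and "prime q" "k * q < p" "a < m * p ^ \<alpha>" "q dvd gcd a (m * p ^ \<alpha>)"
  shows "pg_deg (m * p ^ \<alpha>) (p ^ \<alpha>) \<le> pg_deg (m * p ^ \<alpha>) a"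
proof -
  define n where "n = m * p ^ \<alpha>"
  define Q where "Q = p ^ (\<alpha> - 1)"
  define t where "t = totient m"
  have p1: "1 < p" using assms(1) prime_gt_1_nat by blast
  have n0: "0 < n" using assms(3) p1 by (simp add: n_def)
  have "1 \<le> k" using assms(3,5) by (cases k) auto
  have "1 \<le> Q" using p1 by (simp add: Q_def)
  have pQ: "p ^ \<alpha> = Q * p"
    using assms(2) by (simp add: Q_def power_eq_if)
  have tn: "totient n = t * (Q * (p - 1))"
    using totient_mult_coprime[of m "p ^ \<alpha>"] totient_prime_power[OF assms(1,2)]
      prime_imp_coprime[OF assms(1,4)]
    by (simp add: n_def t_def Q_def coprime_commute)
  have deg_pp: "pg_deg n (p ^ \<alpha>) + 1 = m + t * (Q * p - 1)"
    using pg_deg_prime_power_part[OF assms(1,4,3), of \<alpha>] by (simp only: n_def t_def pQ)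
  have qn: "q dvd n"
    using assms(9) dvd_trans by (auto simp: n_def)
  have "q * (k * t * Q) = t * Q * (k * q)"
    by (simp add: ac_simps)
  also have "\<dots> \<le> t * Q * (p - 1)"
    using assms(7) by (intro mult_le_mono2) linarith
  also have "\<dots> \<le> q * totient (n div q)"
    using totient_le_prime_mult_totient_div[OF assms(6) qn] tn by (simp add: ac_simps)
  finally have "k * t * Q \<le> totient (n div q)"
    using prime_gt_0_nat[OF assms(6)] by simp
  moreover have "k * t + t * Q \<le> k * t * Q + t"
  proof -
    obtain k' Q' where "k = Suc k'" "Q = Suc Q'"
      using \<open>1 \<le> k\<close> \<open>1 \<le> Q\<close> by (metis Suc_le_D One_nat_def)
    then show ?thesis by (simp add: algebra_simps)
  qed
  moreover have "t * (Q * p - 1) + t = t * Q * p" "totient n + t * Q = t * Q * p"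
    using \<open>1 \<le> Q\<close> p1 tn by (simp_all add: diff_mult_distrib2 algebra_simps)
  moreover have "m \<le> k * t"
    using assms(5) by (simp add: t_def)
  ultimately have "m + t * (Q * p - 1) \<le> totient n + totient (n div q)"
    by linarith
  moreover have "a < n" "q dvd gcd a n"
    using assms(8,9) by (simp_all add: n_def)
  ultimately have "pg_deg n (p ^ \<alpha>) \<le> pg_deg n a"
    using deg_pp pg_deg_ge_of_prime_dvd_gcd[OF n0 _ assms(6)] by fastforce
  then show ?thesis by (simp only: n_def)
qed

theorem pg_min_deg_eq_pg_deg_prime_power_part:
  fixes p m k \<alpha> :: nat
  assumes "prime p" "0 < \<alpha>" "1 < m" "\<not> p dvd m"
    and "m \<le> k * totient m"
    and "\<And>q. prime q \<Longrightarrow> q dvd m \<Longrightarrow> k * q < p"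
  shows "pg_min_deg (m * p ^ \<alpha>) = pg_deg (m * p ^ \<alpha>) (p ^ \<alpha>)"
proof -
  define n where "n = m * p ^ \<alpha>"
  have "pg_deg n (p ^ \<alpha>) \<le> pg_deg n a" if "a < n" for a
  proof (cases "coprime (gcd a n) m")
    case True
    then show ?thesis
      using pg_deg_prime_power_part_le_of_coprime_gcd[OF assms(1,3)] that by (simp add: n_def)
  next
    case False
    then have "gcd (gcd a n) m \<noteq> 1"
      using coprime_iff_gcd_eq_1 by blast
    then obtain q where "prime q" "q dvd gcd (gcd a n) m"
      using prime_factor_nat by blast
    then have "prime q" "q dvd gcd a n" "q dvd m"
      by (meson dvd_trans gcd_dvd1 gcd_dvd2)+
    then show ?thesis
      using pg_deg_prime_power_part_le_of_prime_dvd_gcd[OF assms(1-5)] assms(6) that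
      by (simp add: n_def)
  qed
  moreover have "p ^ \<alpha> < n"
    using assms(3) prime_gt_1_nat[OF assms(1)] by (simp add: n_def)
  ultimately have "pg_min_deg n = pg_deg n (p ^ \<alpha>)"
    unfolding pg_min_deg_def by (intro Min_eqI) auto
  then show ?thesis by (simp only: n_def)
qed

lemma one_minus_sum_le_prod_one_minus:
  fixes x :: "'a \<Rightarrow> real"
  assumes "finite S" "\<forall>i\<in>S. 0 \<le> x i \<and> x i \<le> 1"
  shows "1 - sum x S \<le> (\<Prod>i\<in>S. 1 - x i)"
  using assms
proof (induction S rule: finite_induct)
  case (insert a S)
  then have "0 \<le> x a" "x a \<le> 1" "0 \<le> sum x S" "1 - sum x S \<le> (\<Prod>i\<in>S. 1 - x i)"
    by (auto intro: sum_nonneg)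
  then have "1 - (x a + sum x S) \<le> (1 - x a) * (1 - sum x S)"
    by (simp add: algebra_simps)
  also have "\<dots> \<le> (1 - x a) * (\<Prod>i\<in>S. 1 - x i)"
    using \<open>x a \<le> 1\<close> \<open>1 - sum x S \<le> _\<close> by (intro mult_left_mono) auto
  finally show ?case using insert by simp
qed simp

lemma one_minus_card_div_le_prod_one_minus_inverse:
  fixes x :: "'a \<Rightarrow> real"
  assumes "finite I" "1 \<le> b" "\<forall>i\<in>I. b \<le> x i"
  shows "1 - card I / b \<le> (\<Prod>i\<in>I. 1 - 1 / x i)"
proof -
  have "(\<Sum>i\<in>I. 1 / x i) \<le> (\<Sum>i\<in>I. 1 / b)"
    using assms by (intro sum_mono frac_le) auto
  moreover have "\<forall>i\<in>I. 0 \<le> 1 / x i \<and> 1 / x i \<le> 1"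
    using assms by auto
  ultimately show ?thesis
    using one_minus_sum_le_prod_one_minus[OF assms(1), of "\<lambda>i. 1 / x i"] by simp
qed

lemma one_le_mult_prod_one_minus_inverse_of_ge_Suc:
  fixes x :: "'a \<Rightarrow> real" and r :: nat
  assumes "finite I" "card I < r" "\<forall>i\<in>I. r + 1 \<le> x i"
  shows "1 \<le> r * (\<Prod>i\<in>I. 1 - 1 / x i)"
proof -
  have "real (card I) \<le> real r - 1"
    using assms(2) by linarith
  then have "real r * card I \<le> real r * (real r - 1)"
    by (intro mult_left_mono) auto
  then have "1 \<le> r * (1 - card I / (r + 1))"
    using assms(2) by (simp add: field_simps algebra_simps)
  also have "\<dots> \<le> r * (\<Prod>i\<in>I. 1 - 1 / x i)"
    using one_minus_card_div_le_prod_one_minus_inverse[OF assms(1), of "r + 1"] assms(3)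
    by (intro mult_left_mono) auto
  finally show ?thesis .
qed

lemma one_le_mult_prod_one_minus_inverse_of_ge_double_Suc:
  fixes x :: "'a \<Rightarrow> real" and y :: real and r :: nat
  assumes "finite J" "card J + 2 \<le> r" "\<forall>j\<in>J. 2 * r + 1 \<le> x j" "2 \<le> y"
  shows "1 \<le> r * ((1 - 1 / y) * (\<Prod>j\<in>J. 1 - 1 / x j))"
proof -
  have "0 \<le> (real r - 2) * (real r + 1)"
    using assms(2) by simp
  moreover have "real r * card J \<le> real r * (real r - 2)"
    using assms(2) by (intro mult_left_mono) auto
  ultimately have "1 \<le> r * (1 / 2 * (1 - card J / (2 * r + 1)))"
    by (simp add: field_simps algebra_simps)
  also have "\<dots> \<le> r * ((1 - 1 / y) * (\<Prod>j\<in>J. 1 - 1 / x j))"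
  proof -
    have "1 / 2 \<le> 1 - 1 / y"
      using assms(4) by (simp add: field_simps)
    moreover have "0 \<le> 1 - card J / (2 * r + 1)"
      using assms(2) by (simp add: field_simps)
    moreover have "1 - card J / (2 * r + 1) \<le> (\<Prod>j\<in>J. 1 - 1 / x j)"
      using one_minus_card_div_le_prod_one_minus_inverse[OF assms(1)] assms(3) by simp
    ultimately show ?thesis
      by (intro mult_left_mono mult_mono) auto
  qed
  finally show ?thesis .
qed

lemma strict_mono_on_interval_Suc:
  fixes p :: "nat \<Rightarrow> 'a :: order"
  assumes "\<forall>i\<in>{1..<r}. p i < p (i + 1)" "1 \<le> i" "i < j" "j \<le> r"
  shows "p i < p j"
proof (rule lift_Suc_mono_less_ivl[of "{1..<r}"])
  show "p n < p (Suc n)" if "n \<in> {1..<r}" for n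
    using assms(1) that by simp
  show "{i..<j} \<subseteq> {1..<r}"
    using assms(2,4) by auto
qed (rule assms(3))

lemma prime_factors_prod_prime_powers:
  fixes p \<alpha> :: "'a \<Rightarrow> nat"
  assumes "finite I" "\<forall>i\<in>I. prime (p i) \<and> 0 < \<alpha> i"
  shows "prime_factors (\<Prod>i\<in>I. p i ^ \<alpha> i) = p ` I"
proof -
  have "0 \<notin> (\<lambda>i. p i ^ \<alpha> i) ` I"
    using assms(2) by (auto dest: prime_gt_0_nat)
  then have "prime_factors (\<Prod>i\<in>I. p i ^ \<alpha> i) = (\<Union>i\<in>I. prime_factors (p i ^ \<alpha> i))"
    using assms(1) by (simp add: prime_factors_prod)
  also have "\<dots> = (\<Union>i\<in>I. {p i})"
    using assms(2) by (intro SUP_cong) (auto simp: prime_factors_power prime_prime_factors)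
  finally show ?thesis by blast
qed

lemma totient_prod_prime_powers:
  fixes p \<alpha> :: "'a \<Rightarrow> nat"
  assumes "finite I" "inj_on p I" "\<forall>i\<in>I. prime (p i) \<and> 0 < \<alpha> i"
  shows "real (totient (\<Prod>i\<in>I. p i ^ \<alpha> i)) =
           real (\<Prod>i\<in>I. p i ^ \<alpha> i) * (\<Prod>i\<in>I. 1 - 1 / real (p i))"
proof -
  have "(\<Prod>q\<in>p ` I. 1 - 1 / real q) = (\<Prod>i\<in>I. 1 - 1 / real (p i))"
    using prod.reindex[OF assms(2)] by simp
  then show ?thesis
    using totient_formula2[of "\<Prod>i\<in>I. p i ^ \<alpha> i"]
    by (simp only: prime_factors_prod_prime_powers[OF assms(1,3)])
qed

lemma one_le_mult_prod_one_minus_inverse_of_gaps: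
  fixes p :: "nat \<Rightarrow> nat" and r :: nat
  assumes "2 \<le> r" "\<forall>i\<in>{1..<r}. 2 \<le> p i" "\<forall>i\<in>{1..<r}. p i < p (i + 1)"
    and "p 1 \<ge> r + 1 \<or> (\<forall>i\<in>{1..<r}. p (i + 1) > r * p i)"
  shows "1 \<le> real r * (\<Prod>i\<in>{1..<r}. 1 - 1 / real (p i))"
  using assms(4)
proof
  assume "r + 1 \<le> p 1"
  moreover have "p 1 \<le> p i" if "i \<in> {1..<r}" for i
    using strict_mono_on_interval_Suc[OF assms(3), of 1 i] that by (cases "i = 1") auto
  ultimately show ?thesis
    using assms(1) by (intro one_le_mult_prod_one_minus_inverse_of_ge_Suc) force+
next
  assume gaps: "\<forall>i\<in>{1..<r}. r * p i < p (i + 1)"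
  have "2 * r + 1 \<le> real (p i)" if "i \<in> {2..<r}" for i
  proof -
    have i: "i - 1 \<in> {1..<r}" "i - 1 + 1 = i"
      using that by auto
    then have "r * 2 \<le> r * p (i - 1)"
      using assms(2) by (intro mult_le_mono2) blast
    moreover have "r * p (i - 1) < p i"
      using gaps i by metis
    ultimately show ?thesis by linarith
  qed
  then have "1 \<le> real r * ((1 - 1 / real (p 1)) * (\<Prod>i\<in>{2..<r}. 1 - 1 / real (p i)))"
    using assms(1,2) by (intro one_le_mult_prod_one_minus_inverse_of_ge_double_Suc) auto
  moreover have "{1..<r} = insert 1 {2..<r}"
    using assms(1) by auto
  ultimately show ?thesis by simp
qed

theorem pg_min_deg_eq_pg_deg_prime_power_part_of_prod:
  fixes p \<alpha> :: "'a \<Rightarrow> nat" and P \<beta> k :: nat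
  assumes "finite I" "I \<noteq> {}" "inj_on p I" "\<forall>i\<in>I. prime (p i) \<and> 0 < \<alpha> i"
    and "prime P" "P \<notin> p ` I" "0 < \<beta>"
    and "1 \<le> real k * (\<Prod>i\<in>I. 1 - 1 / real (p i))"
    and "\<forall>i\<in>I. k * p i < P"
  shows "pg_min_deg ((\<Prod>i\<in>I. p i ^ \<alpha> i) * P ^ \<beta>) = pg_deg ((\<Prod>i\<in>I. p i ^ \<alpha> i) * P ^ \<beta>) (P ^ \<beta>)"
proof -
  define m where "m = (\<Prod>i\<in>I. p i ^ \<alpha> i)"
  have m_factors: "prime_factors m = p ` I"
    unfolding m_def using assms(1,4) by (rule prime_factors_prod_prime_powers)
  have "m \<noteq> 0"
    unfolding m_def using assms(1,4) by (auto dest: prime_gt_0_nat)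
  have factor: "q \<in> p ` I" if "prime q" "q dvd m" for q
  proof -
    have "q \<in> prime_factors m"
      using that \<open>m \<noteq> 0\<close> by (simp add: in_prime_factors_iff)
    then show ?thesis by (simp add: m_factors)
  qed
  have "1 < m"
    using \<open>m \<noteq> 0\<close> assms(2) m_factors by (cases "m = 1") auto
  moreover have "\<not> P dvd m"
    using factor assms(5,6) by blast
  moreover have "m \<le> k * totient m"
  proof -
    have "real m = real m * 1"
      by simp
    also have "\<dots> \<le> real m * (real k * (\<Prod>i\<in>I. 1 - 1 / real (p i)))"
      using assms(8) by (intro mult_left_mono) auto
    also have "\<dots> = real k * real (totient m)"
      unfolding m_def by (subst totient_prod_prime_powers[OF assms(1,3,4)]) simp
    finally show ?thesis
      by (simp flip: of_nat_mult)
  qed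
  moreover have "k * q < P" if "prime q" "q dvd m" for q
    using factor[OF that] assms(9) by blast
  ultimately show ?thesis
    using assms(5,7) unfolding m_def[symmetric] by (intro pg_min_deg_eq_pg_deg_prime_power_part)
qed

theorem corollary1p4:
  fixes n r :: nat and p \<alpha> :: "nat \<Rightarrow> nat"
  assumes "r \<ge> 2"
    and "\<forall>i\<in>{1..r}. prime (p i) \<and> \<alpha> i > 0"
    and "\<forall>i\<in>{1..<r}. p i < p (i + 1)"
    and "n = (\<Prod>i=1..r. p i ^ \<alpha> i)"
    and "(p 1 \<ge> r + 1 \<and> p r > r * p (r - 1)) \<or> (\<forall>i\<in>{1..<r}. p (i + 1) > r * p i)"
  shows "pg_min_deg n = pg_deg n (p r ^ \<alpha> r)"
proof -
  have mono: "p i < p j" if "1 \<le> i" "i < j" "j \<le> r" for i j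
    using strict_mono_on_interval_Suc[OF assms(3) that] .
  have inj: "inj_on p {1..r}"
    by (intro linorder_inj_onI' less_imp_neq mono) auto
  have "{1..r} = insert r {1..<r}"
    using assms(1) by auto
  then have n: "n = (\<Prod>i\<in>{1..<r}. p i ^ \<alpha> i) * p r ^ \<alpha> r"
    using assms(4) by (simp add: mult.commute)
  have "r - 1 \<in> {1..<r}" "r - 1 + 1 = r"
    using assms(1) by auto
  then have "r * p (r - 1) < p r"
    using assms(5) by metis
  moreover have "p i \<le> p (r - 1)" if "i \<in> {1..<r}" for i
    using mono[of i "r - 1"] that by (cases "i = r - 1") (auto simp: le_less)
  ultimately have "\<forall>i\<in>{1..<r}. r * p i < p r"
    by (meson mult_le_mono2 order.strict_trans1)
  moreover have "1 \<le> real r * (\<Prod>i\<in>{1..<r}. 1 - 1 / real (p i))"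
    using assms(1,2,3,5) by (intro one_le_mult_prod_one_minus_inverse_of_gaps) (auto dest: prime_ge_2_nat)
  ultimately show ?thesis
    unfolding n using assms(1,2) inj
    by (intro pg_min_deg_eq_pg_deg_prime_power_part_of_prod) (auto intro: inj_on_subset)
qed

end
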